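(* Let $n$ be a positive integer, $0\le m\le\lfloor n/2\rfloor$ and $0\le k\le m$. Let $T_k$ be the Young tableau of shape $(n-k,k)$ whose first row contains $1,2,\dots,n-k$ and whose second row contains $n-k+1,\dots,n$ (so its columns of length two are $\{i,n-k+i\}$, $1\le i\le k$). Let $R(T_k)\subseteq S_n$ be the subgroup of permutations of $\{1,\dots,n\}$ preserving each row of $T_k$ as a set, and $C(T_k)\subseteq S_n$ the subgroup preserving each column as a set. Let $\Omega=\{n-m+1,\dots,n\}$. For $p\in R(T_k)$ and $q\in C(T_k)$ put $$V=\{\,i \mid i\le k,\ q(i)\ne i\,\},\qquad W=\{\,i\in\Omega \mid p(i)\notin \Omega\cup V\,\}.$$ Then the cardinality of $\Omega\cap (qp)(\Omega)$ equals $m-\#V-\#W$, where $(qp)(\Omega)=q(p(\Omega))$ is the image of the set $\Omega$.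
   Context: $\#X$ denotes the cardinality of a finite set $X$. Permutations act on $\{1,\dots,n\}$ and the product $qp$ means $q\circ p$ (first $p$, then $q$). *)

theory Defs
  imports "HOL-Combinatorics.Permutations"
begin

definition tab_rows :: "nat \<Rightarrow> nat \<Rightarrow> nat set set" where
  "tab_rows n k = {{1..n-k}, {n-k+1..n}}"

definition tab_cols :: "nat \<Rightarrow> nat \<Rightarrow> nat set set" where
  "tab_cols n k = (\<lambda>i. {i, n-k+i}) ` {1..k} \<union> (\<lambda>i. {i}) ` {k+1..n-k}"

definition row_group :: "nat \<Rightarrow> nat \<Rightarrow> (nat \<Rightarrow> nat) set" where
  "row_group n k = {p. p permutes {1..n} \<and> (\<forall>r\<in>tab_rows n k. p ` r = r)}"

definition col_group :: "nat \<Rightarrow> nat \<Rightarrow> (nat \<Rightarrow> nat) set" where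
  "col_group n k = {q. q permutes {1..n} \<and> (\<forall>c\<in>tab_cols n k. q ` c = c)}"

end

theory Submission
  imports Defs
begin

text \<open>
  Write \<open>A = {1..n-k}\<close> and \<open>B = {n-k+1..n}\<close> for the rows of \<open>T\<^sub>k\<close>; since \<open>k \<le> m\<close> we have
  \<open>B \<subseteq> \<Omega>\<close>. A column permutation \<open>q\<close> fixes every point except that it swaps \<open>i\<close> with
  \<open>n-k+i\<close> for \<open>i \<in> V\<close>. Count the points of \<open>\<Omega>\<close> that \<open>qp\<close> moves out of \<open>\<Omega>\<close>. A point of
  \<open>B\<close> is mapped by \<open>p\<close> into \<open>B\<close>, and \<open>q\<close> then leaves \<open>\<Omega>\<close> exactly from the points
  \<open>n-k+i\<close>, \<open>i \<in> V\<close>; as \<open>p\<close> is a bijection of \<open>B\<close>, this contributes \<open>#V\<close>. A point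
  \<open>x \<in> \<Omega> \<inter> A\<close> is mapped by \<open>p\<close> into \<open>A\<close>, and for \<open>y \<in> A\<close> we have \<open>q y \<in> \<Omega>\<close> iff
  \<open>y \<in> \<Omega> \<union> V\<close>; so these points are exactly \<open>W\<close>.
\<close>

lemma card_Int_image_add_card_escaping:
  assumes "finite A" and "inj_on f A"
  shows "card (A \<inter> f ` A) + card {x \<in> A. f x \<notin> A} = card A"
proof -
  have "A \<inter> f ` A = f ` (A \<inter> f -` A)" and "A - f -` A = {x \<in> A. f x \<notin> A}" by auto
  moreover have "card (f ` (A \<inter> f -` A)) = card (A \<inter> f -` A)"
    by (rule card_image, rule inj_on_subset[OF assms(2)]) auto
  ultimately show ?thesis using card_Int_Diff[OF assms(1), of "f -` A"] by simp
qed

lemma card_filter_bij_betw: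
  assumes "bij_betw f A A"
  shows "card {x \<in> A. P (f x)} = card {y \<in> A. P y}"
proof -
  have "f ` {x \<in> A. P (f x)} = {y \<in> A. P y}"
    using assms by (auto simp: bij_betw_def)
  moreover have "inj_on f {x \<in> A. P (f x)}"
    using assms by (auto simp: bij_betw_def intro: inj_on_subset)
  ultimately show ?thesis by (metis card_image)
qed

lemma row_group_bij_betw_rows:
  assumes "p \<in> row_group n k"
  shows "bij_betw p {1..n-k} {1..n-k}" and "bij_betw p {n-k+1..n} {n-k+1..n}"
proof -
  have "inj p" and "p ` {1..n-k} = {1..n-k}" and "p ` {n-k+1..n} = {n-k+1..n}"
    using assms permutes_inj by (auto simp: row_group_def tab_rows_def)
  then show "bij_betw p {1..n-k} {1..n-k}" and "bij_betw p {n-k+1..n} {n-k+1..n}"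
    by (auto simp: bij_betw_def intro: inj_on_subset)
qed

lemma col_group_fixes_singleton_columns:
  assumes "q \<in> col_group n k" and "k < i" and "i \<le> n - k"
  shows "q i = i"
proof -
  have "{i} \<in> tab_cols n k"
    using assms(2,3) by (auto simp: tab_cols_def)
  with assms(1) show ?thesis by (auto simp: col_group_def)
qed

lemma col_group_fixes_or_swaps_column:
  assumes "q \<in> col_group n k" and "k < n" and "1 \<le> i" and "i \<le> k"
  shows "(q i = i \<and> q (n-k+i) = n-k+i) \<or> (q i = n-k+i \<and> q (n-k+i) = i)"
proof -
  have "{i, n-k+i} \<in> tab_cols n k"
    using assms(3,4) by (auto simp: tab_cols_def)
  moreover have "\<forall>c \<in> tab_cols n k. q ` c = c"
    using assms(1) by (simp add: col_group_def)
  ultimately have col: "q ` {i, n-k+i} = {i, n-k+i}" by (rule bspec[rotated])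
  moreover have "inj q"
    using assms(1) by (auto simp: col_group_def dest: permutes_inj)
  moreover have "i \<noteq> n-k+i" using assms(2) by simp
  ultimately have "q i \<noteq> q (n-k+i)" by (meson injD)
  with col show ?thesis by (auto simp: doubleton_eq_iff)
qed

locale two_row_tableau_perms =
  fixes n m k :: nat and p q :: "nat \<Rightarrow> nat"
  assumes two_m_le: "2 * m \<le> n" and k_le_m: "k \<le> m"
    and p_row: "p \<in> row_group n k" and q_col: "q \<in> col_group n k"
begin

abbreviation \<Omega> :: "nat set" where "\<Omega> \<equiv> {n-m+1..n}"
abbreviation V :: "nat set" where "V \<equiv> {i \<in> {1..k}. q i \<noteq> i}"
abbreviation W :: "nat set" where "W \<equiv> {i \<in> \<Omega>. p i \<notin> \<Omega> \<union> V}"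

lemma second_row_subset_top: "{n-k+1..n} \<subseteq> \<Omega>"
  using k_le_m by auto

lemma p_second_row_into_top: "x \<in> {n-k+1..n} \<Longrightarrow> p x \<in> \<Omega>"
  using bij_betw_apply[OF row_group_bij_betw_rows(2)[OF p_row]] second_row_subset_top by blast

lemma q_first_row_into_top_iff:
  assumes "y \<in> {1..n-k}"
  shows "q y \<in> \<Omega> \<longleftrightarrow> y \<in> \<Omega> \<union> V"
proof (cases "y \<le> k")
  case True
  with assms two_m_le k_le_m have "y \<notin> \<Omega>" and "n-k+y \<in> \<Omega>" by auto
  with True assms q_col two_m_le k_le_m col_group_fixes_or_swaps_column[of q n k y]
  show ?thesis by auto
next
  case False
  with assms q_col col_group_fixes_singleton_columns[of q n k y] show ?thesis by auto
qed

lemma q_second_row_out_of_top: "{y \<in> {n-k+1..n}. q y \<notin> \<Omega>} = (\<lambda>i. n-k+i) ` V"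
proof (intro set_eqI iffI)
  fix y
  assume y: "y \<in> {y \<in> {n-k+1..n}. q y \<notin> \<Omega>}"
  define i where "i = y - (n-k)"
  have i: "1 \<le> i" "i \<le> k" "y = n-k+i" using y by (auto simp: i_def)
  with y second_row_subset_top have "q y \<noteq> y" by auto
  with i q_col two_m_le k_le_m col_group_fixes_or_swaps_column[of q n k i] have "q i \<noteq> i" by auto
  with i show "y \<in> (\<lambda>i. n-k+i) ` V" by auto
next
  fix y
  assume "y \<in> (\<lambda>i. n-k+i) ` V"
  then obtain i where i: "1 \<le> i" "i \<le> k" "y = n-k+i" "q i \<noteq> i" by auto
  with q_col two_m_le k_le_m col_group_fixes_or_swaps_column[of q n k i] have "q y = i" by auto
  with i two_m_le k_le_m show "y \<in> {y \<in> {n-k+1..n}. q y \<notin> \<Omega>}" by auto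
qed

lemma escaping_top_eq:
  "{x \<in> \<Omega>. q (p x) \<notin> \<Omega>} = {x \<in> {n-k+1..n}. q (p x) \<notin> \<Omega>} \<union> W"
proof (intro set_eqI)
  fix x
  show "x \<in> {x \<in> \<Omega>. q (p x) \<notin> \<Omega>} \<longleftrightarrow> x \<in> {x \<in> {n-k+1..n}. q (p x) \<notin> \<Omega>} \<union> W"
  proof (cases "x \<in> \<Omega> - {n-k+1..n}")
    case True
    with two_m_le have "x \<in> {1..n-k}" by auto
    then have "p x \<in> {1..n-k}" by (rule bij_betw_apply[OF row_group_bij_betw_rows(1)[OF p_row]])
    with True q_first_row_into_top_iff show ?thesis by auto
  next
    case False
    with p_second_row_into_top second_row_subset_top show ?thesis by auto
  qed
qed

lemma card_second_row_escaping: "card {x \<in> {n-k+1..n}. q (p x) \<notin> \<Omega>} = card V"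
proof -
  have "card {x \<in> {n-k+1..n}. q (p x) \<notin> \<Omega>} = card {y \<in> {n-k+1..n}. q y \<notin> \<Omega>}"
    by (rule card_filter_bij_betw[OF row_group_bij_betw_rows(2)[OF p_row]])
  also have "\<dots> = card V"
    unfolding q_second_row_out_of_top by (rule card_image) (simp add: inj_on_def)
  finally show ?thesis .
qed

lemma card_top_Int_image: "card (\<Omega> \<inter> (q \<circ> p) ` \<Omega>) + card V + card W = m"
proof -
  have "inj (q \<circ> p)"
    using p_row q_col by (auto simp: row_group_def col_group_def intro: inj_compose permutes_inj)
  then have "inj_on (q \<circ> p) \<Omega>" by (rule inj_on_subset) simp
  then have "card (\<Omega> \<inter> (q \<circ> p) ` \<Omega>) + card {x \<in> \<Omega>. q (p x) \<notin> \<Omega>} = card \<Omega>"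
    using card_Int_image_add_card_escaping[of \<Omega> "q \<circ> p"] by simp
  moreover have "card {x \<in> \<Omega>. q (p x) \<notin> \<Omega>} = card V + card W"
    unfolding escaping_top_eq card_second_row_escaping[symmetric]
    by (rule card_Un_disjoint) (use p_second_row_into_top in auto)
  ultimately show ?thesis using two_m_le by simp
qed

end

theorem lemma2:
  fixes n m k :: nat and p q :: "nat \<Rightarrow> nat"
  assumes "n > 0" and "m \<le> n div 2" and "k \<le> m"
    and "p \<in> row_group n k" and "q \<in> col_group n k"
  defines "\<Omega> \<equiv> {n-m+1..n}"
  defines "V \<equiv> {i \<in> {1..k}. q i \<noteq> i}"
  defines "W \<equiv> {i \<in> \<Omega>. p i \<notin> \<Omega> \<union> V}"
  shows "int (card (\<Omega> \<inter> (q \<circ> p) ` \<Omega>)) = int m - int (card V) - int (card W)"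
proof -
  interpret two_row_tableau_perms n m k p q
    using assms(2-5) by unfold_locales auto
  show ?thesis
    using card_top_Int_image unfolding \<Omega>_def V_def W_def by linarith
qed

end
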